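(* Fix a basis $\{b_1,\ldots,b_d\}$ of $\mathbb{R}^d$. For each $I\subseteq [d]=\{1,\dots,d\}$, let $p_I:\mathbb{R}^d\to \mathbb{R}^I$ be the projection onto the span of $\{b_i\}_{i\in I}$ along the given basis (i.e. $p_I(\sum_i x_ib_i)=\sum_{i\in I}x_ib_i$). Then, for any non-empty finite subsets $A,B$ of $\mathbb{R}^d$, $$|A+B|\geq \left(|A|^{1/d}+|B|^{1/d}\right)^d-\sum_{I\subsetneq [d]}|p_I(A+B)|.$$ *)

theory Defs
  imports "HOL-Analysis.Analysis"
begin

definition basis_proj :: "('n::finite \<Rightarrow> real^'n) \<Rightarrow> 'n set \<Rightarrow> real^'n \<Rightarrow> real^'n" where
  "basis_proj b I x = (\<Sum>i\<in>I. representation (range b) x (b i) *\<^sub>R b i)"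

end

theory Submission
  imports Defs "HOL-Library.Function_Algebras"
begin

text \<open>In coordinates with respect to b the projection p_I keeps the coordinates in I and zeroes
  the others, and |A + B| together with the subtracted sum is the sum of |p_I(A + B)| over all
  I \<subseteq> [d]. For finite sets supported on a coordinate set D one proves, for every 0 < t < 1,
  min (|A| / t^|D|, |B| / (1 - t)^|D|) \<le> sum of |p_I(A + B)| over I \<subseteq> D, by induction on D.
  When a coordinate j is added, the sum for D \<union> {j} is the sum for D plus, for each value z
  of the j-th coordinate, the sum for D over the fibre of A + B above z. The fibres of A and B
  above a and b add into the fibre above a + b, so the induction hypothesis, applied with a
  weight t' that equalises the largest fibres of A and B, bounds each fibre sum from below;
  a weighted Cauchy-Davenport inequality on the line adds up these bounds, and Bernoulli's
  inequality passes from t' back to t. The choice t = |A|^(1/d) / (|A|^(1/d) + |B|^(1/d)) turns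
  the minimum into (|A|^(1/d) + |B|^(1/d))^d.\<close>

lemma card_eq_sum_card_fibers: "finite S \<Longrightarrow> card S = (\<Sum>z\<in>f ` S. card {x \<in> S. f x = z})"
proof -
  assume "finite S"
  then have "(\<Sum>x\<in>S. 1::nat) = (\<Sum>z\<in>f ` S. \<Sum>x\<in>{x \<in> S. f x = z}. 1)"
    by (rule sum.image_gen)
  then show ?thesis
    by simp
qed

lemma additive_image_set_plus:
  assumes "\<And>x y. f (x + y) = f x + f y"
  shows "f ` (A + B) = f ` A + f ` B"
proof
  show "f ` (A + B) \<subseteq> f ` A + f ` B"
    using assms by (auto elim!: set_plus_elim intro!: set_plus_intro)
  show "f ` A + f ` B \<subseteq> f ` (A + B)"
  proof
    fix z
    assume "z \<in> f ` A + f ` B"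
    then obtain x y where "x \<in> A" "y \<in> B" "z = f (x + y)"
      by (auto elim!: set_plus_elim simp: assms)
    then show "z \<in> f ` (A + B)"
      by blast
  qed
qed

lemma card_set_plus_ge:
  fixes A B :: "'a::linordered_cancel_ab_semigroup_add set"
  assumes "finite A" "A \<noteq> {}" "finite B" "B \<noteq> {}"
  shows "card A + card B \<le> card (A + B) + 1"
  using assms(1,2)
proof (induction A rule: finite_linorder_max_induct)
  case empty
  then show ?case by simp
next
  case (insert a A)
  show ?case
  proof (cases "A = {}")
    case True
    have "{a} + B = (+) a ` B"
      by (auto simp: set_plus_def)
    moreover have "card ((+) a ` B) = card B"
      by (simp add: card_image)
    ultimately show ?thesis
      using True by simp
  next
    case False
    define m where "m = Max B"
    have m: "m \<in> B" "\<And>y. y \<in> B \<Longrightarrow> y \<le> m"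
      using assms(3,4) by (simp_all add: m_def)
    have "a + m \<notin> A + B"
    proof
      assume "a + m \<in> A + B"
      then obtain x y where "x \<in> A" "y \<in> B" "a + m = x + y"
        by (auto elim: set_plus_elim)
      with insert.hyps(2) m(2) show False
        by (metis add_less_le_mono less_irrefl)
    qed
    moreover have "insert (a + m) (A + B) \<subseteq> insert a A + B"
      using m(1) by (auto simp: set_plus_def)
    ultimately have "card (A + B) + 1 \<le> card (insert a A + B)"
      using card_mono[of "insert a A + B" "insert (a + m) (A + B)"] insert.hyps(1) assms(3)
      by (simp add: finite_set_plus)
    moreover have "card (insert a A) = card A + 1"
      using insert.hyps by auto
    ultimately show ?thesis
      using insert.IH False by simp
  qed
qed

lemma weighted_card_set_plus_ge:
  fixes X Y :: "'a::linordered_cancel_ab_semigroup_add set" and f g h :: "'a \<Rightarrow> real"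
  assumes "finite X" "X \<noteq> {}" "finite Y" "Y \<noteq> {}"
    and "f ` X \<subseteq> {0..T}" "T \<in> f ` X" "g ` Y \<subseteq> {0..T}" "T \<in> g ` Y"
    and "\<And>x y. x \<in> X \<Longrightarrow> y \<in> Y \<Longrightarrow> min (f x) (g y) \<le> h (x + y)"
  shows "sum f X + sum g Y - T \<le> sum h (X + Y)"
  using assms
proof (induction "card X + card Y" arbitrary: X Y f g h T rule: less_induct)
  case less
  \<comment> \<open>Subtract the least value t of f and g: the constant part is Cauchy-Davenport scaled
    by t, and the rest is the same inequality for the strict superlevel sets of t, which are smaller.\<close>
  define t where "t = Min (f ` X \<union> g ` Y)"
  have t_in: "t \<in> f ` X \<union> g ` Y"
    unfolding t_def using less.prems(1-4) by (intro Min_in) auto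
  have t_le: "\<And>x. x \<in> X \<Longrightarrow> t \<le> f x" "\<And>y. y \<in> Y \<Longrightarrow> t \<le> g y"
    using less.prems(1,3) by (simp_all add: t_def)
  have "0 \<le> t" "t \<le> T"
    using t_in t_le less.prems(5-8) by force+
  have h_ge: "t \<le> h z" if "z \<in> X + Y" for z
    using that t_le less.prems(9) by (elim set_plus_elim) (metis min.bounded_iff order.trans)
  have reduced: "sum (\<lambda>x. f x - t) X + sum (\<lambda>y. g y - t) Y - (T - t) \<le> sum (\<lambda>z. h z - t) (X + Y)"
  proof (cases "t = T")
    case True
    then have "\<And>x. x \<in> X \<Longrightarrow> f x = t" "\<And>y. y \<in> Y \<Longrightarrow> g y = t"
      using t_le less.prems(5,7) by force+
    then show ?thesis
      using True h_ge by (simp add: sum_nonneg)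
  next
    case False
    define X' where "X' = {x \<in> X. t < f x}"
    define Y' where "Y' = {y \<in> Y. t < g y}"
    have "X' \<subseteq> X" "Y' \<subseteq> Y"
      by (auto simp: X'_def Y'_def)
    have "X' \<subset> X \<or> Y' \<subset> Y"
      using t_in by (auto simp: X'_def Y'_def)
    then have "card X' + card Y' < card X + card Y"
      using \<open>X' \<subseteq> X\<close> \<open>Y' \<subseteq> Y\<close> less.prems(1,3)
      by (metis add_le_less_mono add_less_le_mono card_mono psubset_card_mono)
    then have "sum (\<lambda>x. f x - t) X' + sum (\<lambda>y. g y - t) Y' - (T - t)
        \<le> sum (\<lambda>z. h z - t) (X' + Y')"
      using less.prems \<open>t \<le> T\<close> False
      by (intro less.hyps) (force simp: X'_def Y'_def)+
    moreover have "sum (\<lambda>x. f x - t) X' = sum (\<lambda>x. f x - t) X"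
      using t_le less.prems(1) by (intro sum.mono_neutral_left) (force simp: X'_def)+
    moreover have "sum (\<lambda>y. g y - t) Y' = sum (\<lambda>y. g y - t) Y"
      using t_le less.prems(3) by (intro sum.mono_neutral_left) (force simp: Y'_def)+
    moreover have "sum (\<lambda>z. h z - t) (X' + Y') \<le> sum (\<lambda>z. h z - t) (X + Y)"
      using \<open>X' \<subseteq> X\<close> \<open>Y' \<subseteq> Y\<close> h_ge less.prems(1,3)
      by (intro sum_mono2 finite_set_plus set_plus_mono2) auto
    ultimately show ?thesis
      by linarith
  qed
  have "(card X + card Y) * t \<le> (card (X + Y) + 1) * t"
    using card_set_plus_ge[of X Y] less.prems(1-4) \<open>0 \<le> t\<close>
    by (intro mult_right_mono) (simp_all flip: of_nat_add)
  with reduced show ?case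
    by (simp add: sum_subtractf algebra_simps)
qed

lemma power_Suc_div_power_ge:
  fixes x y :: real
  assumes "0 \<le> x" "0 < y"
  shows "Suc k * x - k * y \<le> x ^ Suc k / y ^ k"
proof -
  have "y * (1 + Suc k * (x / y - 1)) \<le> y * (x / y) ^ Suc k"
    using Bernoulli_inequality[of "x / y - 1" "Suc k"] assms by (intro mult_left_mono) simp_all
  moreover have "y * (1 + Suc k * (x / y - 1)) = Suc k * x - k * y"
    using assms(2) by (simp add: field_simps)
  moreover have "y * (x / y) ^ Suc k = x ^ Suc k / y ^ k"
    using assms(2) by (simp add: power_divide)
  ultimately show ?thesis
    by simp
qed

lemma min_div_power_Suc_le:
  fixes F G \<theta> \<theta>' :: real
  assumes "0 \<le> F" "0 \<le> G" "0 < \<theta>'" "\<theta>' < 1" "0 < \<theta>" "\<theta> < 1"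
  shows "min (F / \<theta> ^ Suc k) (G / (1 - \<theta>) ^ Suc k) \<le> F / \<theta>' ^ k + G / (1 - \<theta>') ^ k"
proof -
  define m where "m = min (F / \<theta> ^ Suc k) (G / (1 - \<theta>) ^ Suc k)"
  have "0 \<le> m"
    using assms by (simp add: m_def)
  have "m * \<theta> ^ Suc k \<le> F" "m * (1 - \<theta>) ^ Suc k \<le> G"
    using assms by (simp_all add: m_def min_le_iff_disj flip: pos_le_divide_eq)
  have "1 \<le> \<theta> ^ Suc k / \<theta>' ^ k + (1 - \<theta>) ^ Suc k / (1 - \<theta>') ^ k"
    using power_Suc_div_power_ge[of \<theta> \<theta>' k] power_Suc_div_power_ge[of "1 - \<theta>" "1 - \<theta>'" k] assms
    by (simp add: algebra_simps)
  then have "m \<le> m * (\<theta> ^ Suc k / \<theta>' ^ k + (1 - \<theta>) ^ Suc k / (1 - \<theta>') ^ k)"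
    using \<open>0 \<le> m\<close> by (metis mult_left_mono mult.right_neutral)
  also have "\<dots> = m * \<theta> ^ Suc k / \<theta>' ^ k + m * (1 - \<theta>) ^ Suc k / (1 - \<theta>') ^ k"
    by (simp add: distrib_left)
  also have "\<dots> \<le> F / \<theta>' ^ k + G / (1 - \<theta>') ^ k"
    using \<open>m * \<theta> ^ Suc k \<le> F\<close> \<open>m * (1 - \<theta>) ^ Suc k \<le> G\<close> assms
    by (intro add_mono divide_right_mono) simp_all
  finally show ?thesis
    by (simp add: m_def)
qed

lemma balancing_weight:
  fixes a b :: real
  assumes "0 < a" "0 < b" "0 < d"
  defines "r \<equiv> a powr (1 / d) + b powr (1 / d)"
  defines "\<theta> \<equiv> a powr (1 / d) / r"
  shows "0 < \<theta>" "\<theta> < 1" "a / \<theta> ^ d = r ^ d" "b / (1 - \<theta>) ^ d = r ^ d"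
proof -
  have "(a powr (1 / d)) ^ d = a" "(b powr (1 / d)) ^ d = b"
    using assms(1-3) by (simp_all flip: powr_realpow add: powr_powr)
  moreover have "0 < a powr (1 / d)" "0 < b powr (1 / d)"
    using assms(1,2) by simp_all
  moreover have "0 < r"
    unfolding r_def using calculation(3,4) by linarith
  moreover have "1 - \<theta> = b powr (1 / d) / r"
    using \<open>0 < r\<close> by (simp add: \<theta>_def field_simps) (simp add: r_def)
  ultimately show "0 < \<theta>" "\<theta> < 1" "a / \<theta> ^ d = r ^ d" "b / (1 - \<theta>) ^ d = r ^ d"
    by (simp_all add: \<theta>_def r_def power_divide)
qed

lemma exists_balancing_weight:
  fixes F G :: real
  assumes "0 < F" "0 < G" "k = 0 \<Longrightarrow> F = G"
  obtains \<theta> where "0 < \<theta>" "\<theta> < 1" "F / \<theta> ^ k = G / (1 - \<theta>) ^ k"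
proof (cases "k = 0")
  case True
  then show ?thesis
    using assms(3) that[of "1 / 2"] by simp
next
  case False
  then show ?thesis
    using balancing_weight[OF assms(1,2), of k] that by auto
qed

lemma weighted_card_set_plus_ge_balanced:
  fixes X Y :: "'a::linordered_cancel_ab_semigroup_add set" and f g h :: "'a \<Rightarrow> real"
  assumes "finite X" "X \<noteq> {}" "finite Y" "Y \<noteq> {}"
    and "\<And>a. a \<in> X \<Longrightarrow> 0 \<le> f a" "\<And>b. b \<in> Y \<Longrightarrow> 0 \<le> g b"
    and "0 < \<theta>" "\<theta> < 1" and balanced: "Max (f ` X) / \<theta> ^ k = Max (g ` Y) / (1 - \<theta>) ^ k"
    and bound: "\<And>a b. a \<in> X \<Longrightarrow> b \<in> Y \<Longrightarrow> min (f a / \<theta> ^ k) (g b / (1 - \<theta>) ^ k) \<le> h (a + b)"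
    and "\<And>z. z \<in> X + Y \<Longrightarrow> h z \<le> H"
  shows "sum f X / \<theta> ^ k + sum g Y / (1 - \<theta>) ^ k \<le> H + sum h (X + Y)"
proof -
  define T where "T = Max (f ` X) / \<theta> ^ k"
  have "0 < \<theta> ^ k" "0 < (1 - \<theta>) ^ k"
    using assms(7,8) by simp_all
  have "Max (f ` X) \<in> f ` X" "Max (g ` Y) \<in> g ` Y"
    using assms(1-4) by simp_all
  then obtain a b where ab: "a \<in> X" "f a = Max (f ` X)" "b \<in> Y" "g b = Max (g ` Y)"
    by (metis imageE)
  have "f a / \<theta> ^ k \<in> {0..T}" if "a \<in> X" for a
    using divide_right_mono[of "f a" "Max (f ` X)" "\<theta> ^ k"] that assms(1,5) \<open>0 < \<theta> ^ k\<close>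
    by (simp add: T_def)
  moreover have "g b / (1 - \<theta>) ^ k \<in> {0..T}" if "b \<in> Y" for b
    using divide_right_mono[of "g b" "Max (g ` Y)" "(1 - \<theta>) ^ k"] that assms(3,6) \<open>0 < (1 - \<theta>) ^ k\<close>
    by (simp add: T_def balanced)
  ultimately have "sum (\<lambda>a. f a / \<theta> ^ k) X + sum (\<lambda>b. g b / (1 - \<theta>) ^ k) Y - T \<le> sum h (X + Y)"
    using assms(1-4) bound ab
    by (intro weighted_card_set_plus_ge) (force simp: T_def balanced)+
  moreover have "T \<le> H"
    using bound[OF ab(1,3)] assms(11)[of "a + b"] ab by (simp add: T_def balanced set_plus_intro)
  ultimately show ?thesis
    by (simp add: sum_divide_distrib)
qed

definition coord_proj :: "'n set \<Rightarrow> ('n \<Rightarrow> 'a::zero) \<Rightarrow> 'n \<Rightarrow> 'a" where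
  "coord_proj I x = (\<lambda>i. if i \<in> I then x i else 0)"

definition supported_on :: "'n set \<Rightarrow> ('n \<Rightarrow> 'a::zero) set" where
  "supported_on D = {x. \<forall>i. i \<notin> D \<longrightarrow> x i = 0}"

definition coord_fiber :: "('n \<Rightarrow> 'a) set \<Rightarrow> 'n \<Rightarrow> 'a \<Rightarrow> ('n \<Rightarrow> 'a) set" where
  "coord_fiber S j z = {x \<in> S. x j = z}"

definition proj_card_sum :: "'n set \<Rightarrow> ('n \<Rightarrow> 'a::zero) set \<Rightarrow> real" where
  "proj_card_sum D S = (\<Sum>I\<in>Pow D. real (card (coord_proj I ` S)))"

lemma coord_proj_coord_proj: "I \<subseteq> D \<Longrightarrow> coord_proj I (coord_proj D x) = coord_proj I x"
  by (auto simp: coord_proj_def fun_eq_iff)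

lemma coord_proj_add: "coord_proj I (x + y) = coord_proj I x + coord_proj I (y :: 'n \<Rightarrow> 'a::monoid_add)"
  by (auto simp: coord_proj_def)

lemma coord_proj_UNIV [simp]: "coord_proj UNIV x = x"
  by (simp add: coord_proj_def)

lemma supported_on_empty: "supported_on {} = {0}"
  by (auto simp: supported_on_def)

lemma coord_proj_in_supported_on: "coord_proj D x \<in> supported_on D"
  by (simp add: coord_proj_def supported_on_def)

lemma proj_card_sum_empty: "S \<noteq> {} \<Longrightarrow> proj_card_sum {} S = 1"
  by (simp add: proj_card_sum_def coord_proj_def image_constant_conv)

lemma proj_card_sum_mono: "finite T \<Longrightarrow> S \<subseteq> T \<Longrightarrow> proj_card_sum D S \<le> proj_card_sum D T"
  unfolding proj_card_sum_def by (intro sum_mono) (auto intro: card_mono)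

lemma proj_card_sum_coord_proj: "proj_card_sum D (coord_proj D ` S) = proj_card_sum D S"
  unfolding proj_card_sum_def by (intro sum.cong) (simp_all add: image_image coord_proj_coord_proj)

lemma coord_proj_insert_upd: "j \<notin> I \<Longrightarrow> (coord_proj (insert j I) x)(j := 0) = coord_proj I x"
  by (auto simp: coord_proj_def fun_eq_iff)

lemma card_coord_proj_insert:
  assumes "finite S" "j \<notin> I"
  shows "card (coord_proj (insert j I) ` S) = (\<Sum>z\<in>(\<lambda>x. x j) ` S. card (coord_proj I ` coord_fiber S j z))"
proof -
  let ?P = "coord_proj (insert j I) ` S"
  have "card ?P = (\<Sum>z\<in>(\<lambda>y. y j) ` ?P. card {y \<in> ?P. y j = z})"
    using assms(1) by (intro card_eq_sum_card_fibers) simp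
  also have "\<dots> = (\<Sum>z\<in>(\<lambda>x. x j) ` S. card (coord_proj I ` coord_fiber S j z))"
  proof (rule sum.cong)
    show "(\<lambda>y. y j) ` ?P = (\<lambda>x. x j) ` S"
      by (simp add: image_image coord_proj_def)
    fix z
    have fiber: "{y \<in> ?P. y j = z} = coord_proj (insert j I) ` coord_fiber S j z"
      by (auto simp: coord_fiber_def coord_proj_def)
    have inj: "inj_on (\<lambda>y. y(j := 0)) {y \<in> ?P. y j = z}"
    proof (rule inj_onI)
      fix y y'
      assume "y \<in> {y \<in> ?P. y j = z}" "y' \<in> {y \<in> ?P. y j = z}" "y(j := 0) = y'(j := 0)"
      then show "y = y'"
        by (metis (mono_tags, lifting) fun_upd_triv fun_upd_upd mem_Collect_eq)
    qed
    have "(\<lambda>y. y(j := 0)) ` {y \<in> ?P. y j = z} = coord_proj I ` coord_fiber S j z"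
      unfolding fiber image_image using assms(2) by (simp add: coord_proj_insert_upd)
    with card_image[OF inj] show "card {y \<in> ?P. y j = z} = card (coord_proj I ` coord_fiber S j z)"
      by simp
  qed
  finally show ?thesis .
qed

lemma proj_card_sum_insert:
  assumes "finite D" "j \<notin> D" "finite S"
  shows "proj_card_sum (insert j D) S = proj_card_sum D S + (\<Sum>z\<in>(\<lambda>x. x j) ` S. proj_card_sum D (coord_fiber S j z))"
proof -
  have "inj_on (insert j) (Pow D)"
    using assms(2) by (auto simp: inj_on_def)
  moreover have "Pow D \<inter> insert j ` Pow D = {}"
    using assms(2) by auto
  ultimately have "proj_card_sum (insert j D) S
      = proj_card_sum D S + (\<Sum>I\<in>Pow D. real (card (coord_proj (insert j I) ` S)))"
    using assms(1) by (simp add: proj_card_sum_def Pow_insert sum.union_disjoint sum.reindex)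
  also have "(\<Sum>I\<in>Pow D. real (card (coord_proj (insert j I) ` S)))
      = (\<Sum>I\<in>Pow D. \<Sum>z\<in>(\<lambda>x. x j) ` S. real (card (coord_proj I ` coord_fiber S j z)))"
  proof (rule sum.cong)
    fix I
    assume "I \<in> Pow D"
    then have "j \<notin> I"
      using assms(2) by auto
    then show "real (card (coord_proj (insert j I) ` S))
        = (\<Sum>z\<in>(\<lambda>x. x j) ` S. real (card (coord_proj I ` coord_fiber S j z)))"
      by (simp add: card_coord_proj_insert assms(3))
  qed simp
  also have "\<dots> = (\<Sum>z\<in>(\<lambda>x. x j) ` S. proj_card_sum D (coord_fiber S j z))"
    unfolding proj_card_sum_def by (rule sum.swap)
  finally show ?thesis .
qed

lemma sum_card_coord_fiber:
  "finite A \<Longrightarrow> (\<Sum>z\<in>(\<lambda>x. x j) ` A. card (coord_fiber A j z)) = card A"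
  unfolding coord_fiber_def by (rule card_eq_sum_card_fibers[symmetric])

lemma card_coord_proj_coord_fiber:
  assumes "A \<subseteq> supported_on (insert j D)"
  shows "card (coord_proj D ` coord_fiber A j z) = card (coord_fiber A j z)"
proof (rule card_image, rule inj_onI, rule ext)
  fix x y i
  assume x: "x \<in> coord_fiber A j z" and y: "y \<in> coord_fiber A j z"
    and eq: "coord_proj D x = coord_proj D y"
  consider "i \<in> D" | "i = j" | "i \<notin> insert j D"
    by blast
  then show "x i = y i"
  proof cases
    case 1
    then show ?thesis
      using fun_cong[OF eq, of i] by (simp add: coord_proj_def)
  next
    case 2
    then show ?thesis
      using x y by (simp add: coord_fiber_def)
  next
    case 3
    have "x \<in> supported_on (insert j D)" "y \<in> supported_on (insert j D)"
      using x y assms by (auto simp: coord_fiber_def)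
    with 3 show ?thesis
      by (simp add: supported_on_def)
  qed
qed

lemma coord_fiber_set_plus:
  fixes A B :: "('n \<Rightarrow> 'a::monoid_add) set"
  shows "coord_proj D ` coord_fiber A j a + coord_proj D ` coord_fiber B j b
    \<subseteq> coord_proj D ` coord_fiber (A + B) j (a + b)"
proof
  fix w
  assume "w \<in> coord_proj D ` coord_fiber A j a + coord_proj D ` coord_fiber B j b"
  then obtain x y where "x \<in> coord_fiber A j a" "y \<in> coord_fiber B j b" "w = coord_proj D (x + y)"
    by (auto elim!: set_plus_elim simp: coord_proj_add)
  moreover have "x + y \<in> coord_fiber (A + B) j (a + b)"
    using calculation by (auto simp: coord_fiber_def)
  ultimately show "w \<in> coord_proj D ` coord_fiber (A + B) j (a + b)"
    by blast
qed

lemma supported_on_UNIV [simp]: "supported_on UNIV = UNIV"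
  by (simp add: supported_on_def)

lemma proj_card_sum_UNIV:
  fixes S :: "('n::finite \<Rightarrow> 'a::zero) set"
  shows "proj_card_sum UNIV S = card S + (\<Sum>I\<in>{I. I \<subset> UNIV}. real (card (coord_proj I ` S)))"
proof -
  have Pow_UNIV: "Pow (UNIV :: 'n set) = insert UNIV {I. I \<subset> UNIV}"
    by auto
  show ?thesis
    unfolding proj_card_sum_def Pow_UNIV by (subst sum.insert) auto
qed

lemma card_coord_fiber_eq_one:
  assumes "A \<subseteq> supported_on {j}" "a \<in> (\<lambda>x. x j) ` A"
  shows "card (coord_fiber A j a) = 1"
proof -
  have "coord_proj {} ` coord_fiber A j a = {0}"
    using assms(2) by (auto simp: coord_fiber_def coord_proj_def zero_fun_def)
  then show ?thesis
    using card_coord_proj_coord_fiber[of A j "{}" a] assms(1) by simp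
qed

lemma proj_card_sum_coord_fiber_set_plus:
  fixes A B :: "('n \<Rightarrow> 'a::monoid_add) set"
  assumes "finite A" "finite B"
  shows "proj_card_sum D (coord_proj D ` coord_fiber A j a + coord_proj D ` coord_fiber B j b)
    \<le> proj_card_sum D (coord_fiber (A + B) j (a + b))"
proof -
  have "finite (coord_proj D ` coord_fiber (A + B) j (a + b))"
    using assms by (simp add: coord_fiber_def finite_set_plus)
  then have "proj_card_sum D (coord_proj D ` coord_fiber A j a + coord_proj D ` coord_fiber B j b)
      \<le> proj_card_sum D (coord_proj D ` coord_fiber (A + B) j (a + b))"
    by (intro proj_card_sum_mono coord_fiber_set_plus)
  then show ?thesis
    by (simp add: proj_card_sum_coord_proj)
qed

lemma proj_card_sum_insert_set_plus_ge:
  fixes A B :: "('n \<Rightarrow> 'a::linordered_ab_group_add) set"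
  assumes "finite D" "j \<notin> D" "finite A" "A \<noteq> {}" "finite B" "B \<noteq> {}"
    and "A \<subseteq> supported_on (insert j D)" "B \<subseteq> supported_on (insert j D)" "0 < \<theta>" "\<theta> < 1"
    and fiber_bound: "\<And>a b \<theta>'. a \<in> (\<lambda>x. x j) ` A \<Longrightarrow> b \<in> (\<lambda>x. x j) ` B \<Longrightarrow> 0 < \<theta>' \<Longrightarrow> \<theta>' < 1 \<Longrightarrow>
      min (card (coord_fiber A j a) / \<theta>' ^ card D) (card (coord_fiber B j b) / (1 - \<theta>') ^ card D)
        \<le> proj_card_sum D (coord_fiber (A + B) j (a + b))"
  shows "min (card A / \<theta> ^ card (insert j D)) (card B / (1 - \<theta>) ^ card (insert j D))
    \<le> proj_card_sum (insert j D) (A + B)"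
proof -
  define X where "X = (\<lambda>x. x j) ` A"
  define Y where "Y = (\<lambda>x. x j) ` B"
  define f where "f a = real (card (coord_fiber A j a))" for a
  define g where "g b = real (card (coord_fiber B j b))" for b
  define h where "h z = proj_card_sum D (coord_fiber (A + B) j z)" for z
  have XY: "finite X" "X \<noteq> {}" "finite Y" "Y \<noteq> {}"
    using assms(3-6) by (simp_all add: X_def Y_def)
  have f_pos: "0 < f a" if "a \<in> X" for a
    using that assms(3) by (auto simp: f_def X_def coord_fiber_def card_gt_0_iff)
  have g_pos: "0 < g b" if "b \<in> Y" for b
    using that assms(5) by (auto simp: g_def Y_def coord_fiber_def card_gt_0_iff)
  have "Max (f ` X) = Max (g ` Y)" if "card D = 0"
  proof -
    have "D = {}"
      using that assms(1) by simp
    then have "f a = 1" "g b = 1" if "a \<in> X" "b \<in> Y" for a b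
      using that assms(7,8) card_coord_fiber_eq_one[of A j a] card_coord_fiber_eq_one[of B j b]
      by (simp_all add: f_def g_def X_def Y_def)
    then have "f ` X = {1}" "g ` Y = {1}"
      using XY by auto
    then show ?thesis
      by simp
  qed
  moreover have "0 < Max (f ` X)" "0 < Max (g ` Y)"
    using XY f_pos g_pos by (auto simp: Max_gr_iff)
  ultimately obtain \<theta>' where \<theta>': "0 < \<theta>'" "\<theta>' < 1"
      "Max (f ` X) / \<theta>' ^ card D = Max (g ` Y) / (1 - \<theta>') ^ card D"
    using exists_balancing_weight by metis
  have "sum f X = card A" "sum g Y = card B"
    using sum_card_coord_fiber[of A j] sum_card_coord_fiber[of B j] assms(3,5)
    by (simp_all add: f_def g_def X_def Y_def flip: of_nat_sum)
  moreover have "sum f X / \<theta>' ^ card D + sum g Y / (1 - \<theta>') ^ card D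
      \<le> proj_card_sum D (A + B) + sum h (X + Y)"
  proof (rule weighted_card_set_plus_ge_balanced)
    show "min (f a / \<theta>' ^ card D) (g b / (1 - \<theta>') ^ card D) \<le> h (a + b)"
      if "a \<in> X" "b \<in> Y" for a b
      using fiber_bound[of a b \<theta>'] that \<theta>' by (simp add: f_def g_def h_def X_def Y_def)
    show "h z \<le> proj_card_sum D (A + B)" for z
      using assms(3,5) by (auto simp: h_def coord_fiber_def finite_set_plus intro!: proj_card_sum_mono)
  qed (use XY less_imp_le[OF f_pos] less_imp_le[OF g_pos] \<theta>' in auto)
  moreover have "proj_card_sum (insert j D) (A + B) = proj_card_sum D (A + B) + sum h (X + Y)"
    using proj_card_sum_insert[OF assms(1,2) finite_set_plus[OF assms(3,5)]]
      additive_image_set_plus[of "\<lambda>x. x j" A B]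
    by (simp add: h_def X_def Y_def)
  moreover have "min (card A / \<theta> ^ Suc (card D)) (card B / (1 - \<theta>) ^ Suc (card D))
      \<le> card A / \<theta>' ^ card D + card B / (1 - \<theta>') ^ card D"
    using \<theta>' assms(9,10) by (intro min_div_power_Suc_le) simp_all
  ultimately show ?thesis
    using assms(1,2) by simp
qed

lemma proj_card_sum_set_plus_ge:
  fixes A B :: "('n \<Rightarrow> 'a::linordered_ab_group_add) set"
  assumes "finite D" "finite A" "A \<noteq> {}" "finite B" "B \<noteq> {}"
    and "A \<subseteq> supported_on D" "B \<subseteq> supported_on D" "0 < \<theta>" "\<theta> < 1"
  shows "min (card A / \<theta> ^ card D) (card B / (1 - \<theta>) ^ card D) \<le> proj_card_sum D (A + B)"
  using assms
proof (induction D arbitrary: A B \<theta> rule: finite_induct)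
  case empty
  then have "A = {0}" "B = {0}"
    by (auto simp: supported_on_empty)
  then show ?case
    by (simp add: proj_card_sum_empty)
next
  case (insert j D)
  show ?case
  proof (rule proj_card_sum_insert_set_plus_ge[OF insert.hyps insert.prems])
    fix a b and \<theta>' :: real
    assume ab: "a \<in> (\<lambda>x. x j) ` A" "b \<in> (\<lambda>x. x j) ` B" and "0 < \<theta>'" "\<theta>' < 1"
    let ?A = "coord_proj D ` coord_fiber A j a" and ?B = "coord_proj D ` coord_fiber B j b"
    have "card ?A = card (coord_fiber A j a)" "card ?B = card (coord_fiber B j b)"
      using insert.prems(5,6) by (simp_all add: card_coord_proj_coord_fiber)
    moreover have "finite ?A" "?A \<noteq> {}" "finite ?B" "?B \<noteq> {}"
      using ab insert.prems(1,3) by (auto simp: coord_fiber_def)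
    ultimately have "min (card (coord_fiber A j a) / \<theta>' ^ card D) (card (coord_fiber B j b) / (1 - \<theta>') ^ card D)
        \<le> proj_card_sum D (?A + ?B)"
      using insert.IH[of ?A ?B \<theta>'] \<open>0 < \<theta>'\<close> \<open>\<theta>' < 1\<close>
      by (simp add: coord_proj_in_supported_on image_subset_iff)
    also have "\<dots> \<le> proj_card_sum D (coord_fiber (A + B) j (a + b))"
      using insert.prems(1,3) by (rule proj_card_sum_coord_fiber_set_plus)
    finally show "min (card (coord_fiber A j a) / \<theta>' ^ card D) (card (coord_fiber B j b) / (1 - \<theta>') ^ card D)
        \<le> proj_card_sum D (coord_fiber (A + B) j (a + b))" .
  qed
qed

lemma proj_card_sum_set_plus_ge_root:
  fixes A B :: "('n \<Rightarrow> 'a::linordered_ab_group_add) set"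
  assumes "finite D" "D \<noteq> {}" "finite A" "A \<noteq> {}" "finite B" "B \<noteq> {}"
    and "A \<subseteq> supported_on D" "B \<subseteq> supported_on D"
  shows "(card A powr (1 / card D) + card B powr (1 / card D)) ^ card D \<le> proj_card_sum D (A + B)"
proof -
  define \<theta> where "\<theta> = card A powr (1 / card D) / (card A powr (1 / card D) + card B powr (1 / card D))"
  have "0 < card A" "0 < card B" "0 < card D"
    using assms(1-6) by (simp_all add: card_gt_0_iff)
  then have "0 < \<theta>" "\<theta> < 1"
    "card A / \<theta> ^ card D = (card A powr (1 / card D) + card B powr (1 / card D)) ^ card D"
    "card B / (1 - \<theta>) ^ card D = (card A powr (1 / card D) + card B powr (1 / card D)) ^ card D"
    using balancing_weight[of "card A" "card B" "card D"] by (simp_all add: \<theta>_def)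
  then show ?thesis
    using proj_card_sum_set_plus_ge[OF assms(1,3-8), of \<theta>] by simp
qed

definition basis_coords :: "('n::finite \<Rightarrow> real^'n) \<Rightarrow> real^'n \<Rightarrow> 'n \<Rightarrow> real" where
  "basis_coords b x i = representation (range b) x (b i)"

lemma basis_coords_add:
  assumes "independent (range b)" "span (range b) = UNIV"
  shows "basis_coords b (x + y) = basis_coords b x + basis_coords b y"
  using assms by (simp add: basis_coords_def fun_eq_iff representation_add)

lemma sum_basis_coords:
  assumes "inj b" "independent (range b)" "span (range b) = UNIV"
  shows "(\<Sum>i\<in>UNIV. basis_coords b x i *\<^sub>R b i) = x"
proof -
  have "(\<Sum>i\<in>UNIV. basis_coords b x i *\<^sub>R b i) = (\<Sum>v\<in>range b. representation (range b) x v *\<^sub>R v)"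
    using assms(1) by (simp add: basis_coords_def sum.reindex)
  also have "\<dots> = x"
    using assms(2,3) by (intro sum_representation_eq) auto
  finally show ?thesis .
qed

lemma inj_basis_coords:
  assumes "inj b" "independent (range b)" "span (range b) = UNIV"
  shows "inj (basis_coords b)"
  by (rule inj_on_inverseI[where g = "\<lambda>c. \<Sum>i\<in>UNIV. c i *\<^sub>R b i"]) (use sum_basis_coords[OF assms] in auto)

lemma basis_coords_basis_proj:
  assumes "inj b" "independent (range b)"
  shows "basis_coords b (basis_proj b I x) = coord_proj I (basis_coords b x)"
proof
  fix j
  have "basis_coords b (basis_proj b I x) j
      = (\<Sum>i\<in>I. representation (range b) x (b i) * representation (range b) (b i) (b j))"
    using assms(2) by (simp add: basis_coords_def basis_proj_def representation_sum
        representation_scale span_base span_scale)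
  also have "\<dots> = (\<Sum>i\<in>I. if i = j then representation (range b) x (b i) else 0)"
    using assms by (intro sum.cong) (auto simp: representation_basis inj_eq)
  also have "\<dots> = coord_proj I (basis_coords b x) j"
    by (simp add: coord_proj_def basis_coords_def)
  finally show "basis_coords b (basis_proj b I x) j = coord_proj I (basis_coords b x) j" .
qed

lemma card_basis_proj_image:
  assumes "inj b" "independent (range b)" "span (range b) = UNIV"
  shows "card (basis_proj b I ` S) = card (coord_proj I ` basis_coords b ` S)"
proof -
  have "card (basis_proj b I ` S) = card (basis_coords b ` basis_proj b I ` S)"
    using inj_basis_coords[OF assms] by (simp add: card_image inj_on_subset)
  then show ?thesis
    using assms(1,2) by (simp add: image_image basis_coords_basis_proj)
qed

theorem lemma2p1:
  fixes b :: "'n::finite \<Rightarrow> real^'n"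
    and A B :: "(real^'n) set"
  assumes "inj b" and "independent (range b)" and "span (range b) = UNIV"
    and "finite A" and "A \<noteq> {}" and "finite B" and "B \<noteq> {}"
  shows "real (card {a + c | a c. a \<in> A \<and> c \<in> B}) \<ge>
           (real (card A) powr (1 / real CARD('n)) + real (card B) powr (1 / real CARD('n))) ^ CARD('n)
           - (\<Sum>I\<in>{I. I \<subset> (UNIV :: 'n set)}.
                real (card (basis_proj b I ` {a + c | a c. a \<in> A \<and> c \<in> B})))"
proof -
  let ?c = "basis_coords b"
  have sumset: "{a + c | a c. a \<in> A \<and> c \<in> B} = A + B"
    by (auto simp: set_plus_def)
  have card_coords: "card (?c ` X) = card X" for X
    using inj_basis_coords[OF assms(1-3)] by (simp add: card_image inj_on_subset)
  have coords_sumset: "?c ` (A + B) = ?c ` A + ?c ` B"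
    using basis_coords_add[OF assms(2,3)] by (rule additive_image_set_plus)
  have "(card A powr (1 / CARD('n)) + card B powr (1 / CARD('n))) ^ CARD('n)
      \<le> proj_card_sum UNIV (?c ` A + ?c ` B)"
    using proj_card_sum_set_plus_ge_root[of UNIV "?c ` A" "?c ` B"] assms(4-7) card_coords by simp
  then show ?thesis
    unfolding sumset using card_basis_proj_image[OF assms(1-3)]
    by (simp add: proj_card_sum_UNIV card_coords flip: coords_sumset)
qed

end
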